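(* Let $M$ be a loopless matroid on ground set $S$ and consider a standard coloring of $M$. Let $Z\subseteq S$ be a subset such that exactly $r_M(Z)$ colors appear in $Z$. Then the coloring restricted to $Z$ is a standard coloring of $M|Z$.
   Context: A coloring is a partition of the ground set into nonempty color classes. A coloring of a rank-$r$ matroid $N$ with color classes $S_1,\dots,S_r$ (so exactly $r$ colors) is standard if, after possibly reindexing the classes, $S_i$ is a cut of the restriction $N|(S_1\cup\dots\cup S_i)$ for every $i=1,\dots,r$, where a cut is an inclusionwise minimal subset of the ground set intersecting every basis. *)

theory Defs
  imports Main "HOL-Library.Disjoint_Sets"
begin

definition matroid :: "'a set \<Rightarrow> ('a set \<Rightarrow> bool) \<Rightarrow> bool" where
  "matroid S indep \<longleftrightarrow> finite S \<and> indep {}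
     \<and> (\<forall>I. indep I \<longrightarrow> I \<subseteq> S)
     \<and> (\<forall>I J. indep J \<and> I \<subseteq> J \<longrightarrow> indep I)
     \<and> (\<forall>I J. indep I \<and> indep J \<and> card I < card J \<longrightarrow> (\<exists>x\<in>J - I. indep (insert x I)))"

definition basis :: "('a set \<Rightarrow> bool) \<Rightarrow> 'a set \<Rightarrow> bool" where
  "basis indep B \<longleftrightarrow> indep B \<and> (\<forall>I. indep I \<and> B \<subseteq> I \<longrightarrow> I = B)"

definition rk :: "('a set \<Rightarrow> bool) \<Rightarrow> 'a set \<Rightarrow> nat" where
  "rk indep X = Max (card ` {I. I \<subseteq> X \<and> indep I})"

definition restr :: "('a set \<Rightarrow> bool) \<Rightarrow> 'a set \<Rightarrow> 'a set \<Rightarrow> bool" where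
  "restr indep X = (\<lambda>I. indep I \<and> I \<subseteq> X)"

definition loopless :: "'a set \<Rightarrow> ('a set \<Rightarrow> bool) \<Rightarrow> bool" where
  "loopless S indep \<longleftrightarrow> (\<forall>x\<in>S. indep {x})"

definition meets_all_bases :: "('a set \<Rightarrow> bool) \<Rightarrow> 'a set \<Rightarrow> bool" where
  "meets_all_bases indep C \<longleftrightarrow> (\<forall>B. basis indep B \<longrightarrow> C \<inter> B \<noteq> {})"

definition is_cut :: "'a set \<Rightarrow> ('a set \<Rightarrow> bool) \<Rightarrow> 'a set \<Rightarrow> bool" where
  "is_cut S indep C \<longleftrightarrow> C \<subseteq> S \<and> meets_all_bases indep C
     \<and> (\<forall>C'. C' \<subset> C \<longrightarrow> \<not> meets_all_bases indep C')"

definition standard_coloring :: "'a set \<Rightarrow> ('a set \<Rightarrow> bool) \<Rightarrow> 'a set set \<Rightarrow> bool" where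
  "standard_coloring S indep P \<longleftrightarrow> partition_on S P \<and>
     (\<exists>\<sigma>. bij_betw \<sigma> {1..rk indep S} P \<and>
        (\<forall>i\<in>{1..rk indep S}.
           is_cut (\<Union>(\<sigma> ` {1..i})) (restr indep (\<Union>(\<sigma> ` {1..i}))) (\<sigma> i)))"

definition restrict_coloring :: "'a set set \<Rightarrow> 'a set \<Rightarrow> 'a set set" where
  "restrict_coloring P Z = {C \<inter> Z | C. C \<in> P \<and> C \<inter> Z \<noteq> {}}"

end

(*
  Order the classes of the standard coloring as S_1, ..., S_r and put
  T_i = S_1 \<union> ... \<union> S_i. Because S_i is a cut of M|T_i, every x \<in> S_i lies outside the
  closure of T_(i-1). List the k = r(Z) classes meeting Z in the same order and let
  Z_1, ..., Z_k be their traces on Z, with U_j = Z_1 \<union> ... \<union> Z_j. Since U_(j-1) is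
  contained in the T_(i-1) of the class giving Z_j, submodularity shows that every element of
  Z_j lies outside the closure of U_(j-1). So r(U_j) increases strictly from r(U_0) = 0 to
  r(U_k) = r(Z) = k in k steps, which forces r(U_j) = j. This rank count, together with the
  closure property, says exactly that Z_j is a cut of M|U_j.
*)
theory Submission
  imports Defs "HOL-Library.Infinite_Set"
begin

lemma ex_bij_betw_strict_mono_card_from_1:
  fixes J :: "nat set"
  assumes "finite J"
  obtains f where "bij_betw f {1..card J} J" "strict_mono_on {1..card J} f"
proof -
  obtain h where h: "bij_betw h {..<card J} J" "strict_mono_on {..<card J} h"
    using ex_bij_betw_strict_mono_card[OF assms] by blast
  have shift: "bij_betw (\<lambda>j. j - 1) {1..card J} {..<card J}"
    by (rule bij_betw_byWitness[where f' = Suc]) auto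
  show thesis
  proof
    show "bij_betw (h \<circ> (\<lambda>j. j - 1)) {1..card J} J"
      using bij_betw_trans[OF shift h(1)] .
    show "strict_mono_on {1..card J} (h \<circ> (\<lambda>j. j - 1))"
      using strict_mono_onD[OF h(2)] by (auto intro!: strict_mono_onI)
  qed
qed

lemma strict_steps_eq_id:
  fixes g :: "nat \<Rightarrow> nat"
  assumes step: "\<And>j. j < k \<Longrightarrow> g j < g (Suc j)" and "g 0 = 0" "g k = k" "j \<le> k"
  shows "g j = j"
proof -
  have gap: "g i + (l - i) \<le> g l" if "i \<le> l" "l \<le> k" for i l
    using that
  proof (induction l rule: dec_induct)
    case (step l)
    then show ?case
      using assms(1)[of l] by simp
  qed simp
  show ?thesis
    using gap[of 0 j] gap[of j k] assms(2-4) by linarith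
qed

lemma prefix_Union_diff:
  fixes A :: "nat \<Rightarrow> 'a set"
  assumes "disjoint_family_on A {1..k}" "j \<in> {1..k}"
  shows "\<Union>(A ` {1..j}) - A j = \<Union>(A ` {1..<j})"
proof -
  have "{1..j} = insert j {1..<j}"
    using assms(2) by auto
  moreover have "x \<notin> A i" if "x \<in> A j" "i \<in> {1..<j}" for x i
    using assms that unfolding disjoint_family_on_def by fastforce
  ultimately show ?thesis by auto
qed

lemma disjoint_family_on_bij_betw_partition:
  "partition_on S P \<Longrightarrow> bij_betw \<sigma> I P \<Longrightarrow> disjoint_family_on \<sigma> I"
  by (metis bij_betw_def disjoint_image_disjoint_family_on partition_onD2)

lemma restrict_coloring_eq: "restrict_coloring P Z = (\<inter>) Z ` P - {{}}"
  unfolding restrict_coloring_def by auto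

lemma partition_on_restrict_coloring:
  assumes "partition_on S P" "Z \<subseteq> S"
  shows "partition_on Z (restrict_coloring P Z)"
  using partition_on_restrict[OF assms(1), of Z] assms(2)
  by (simp add: restrict_coloring_eq Int_absorb2)

lemma bij_betw_restrict_coloring:
  assumes "partition_on S P"
  shows "bij_betw (\<lambda>C. C \<inter> Z) {C \<in> P. C \<inter> Z \<noteq> {}} (restrict_coloring P Z)"
proof (rule bij_betw_imageI)
  show "inj_on (\<lambda>C. C \<inter> Z) {C \<in> P. C \<inter> Z \<noteq> {}}"
    using partition_onD2[OF assms] unfolding inj_on_def disjoint_def by blast
qed (auto simp: restrict_coloring_def)

lemma restr_restr: "U \<subseteq> Z \<Longrightarrow> restr (restr indep Z) U = restr indep U"
  unfolding restr_def by auto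

lemma rk_restr: "X \<subseteq> Z \<Longrightarrow> rk (restr indep Z) X = rk indep X"
  unfolding rk_def restr_def by (metis (lifting) order_trans)

locale matroid_on =
  fixes S :: "'a set" and indep :: "'a set \<Rightarrow> bool"
  assumes matroid: "matroid S indep"
begin

lemma finite_ground: "finite S"
  using matroid by (simp add: matroid_def)

lemma indep_subset_ground: "indep I \<Longrightarrow> I \<subseteq> S"
  using matroid by (simp add: matroid_def)

lemma finite_indep: "indep I \<Longrightarrow> finite I"
  using finite_ground indep_subset_ground finite_subset by blast

lemma indep_empty: "indep {}"
  using matroid by (simp add: matroid_def)

lemma indep_subset: "indep J \<Longrightarrow> I \<subseteq> J \<Longrightarrow> indep I"
  using matroid unfolding matroid_def by blast

lemma indep_augment:
  "indep I \<Longrightarrow> indep J \<Longrightarrow> card I < card J \<Longrightarrow> \<exists>x\<in>J - I. indep (insert x I)"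
  using matroid unfolding matroid_def by blast

lemma finite_indep_subsets: "finite {I. I \<subseteq> X \<and> indep I}"
  by (rule finite_subset[of _ "Pow S"]) (use finite_ground indep_subset_ground in auto)

lemma card_le_rk: "indep I \<Longrightarrow> I \<subseteq> X \<Longrightarrow> card I \<le> rk indep X"
  unfolding rk_def using finite_indep_subsets by (auto intro!: Max_ge)

lemma rk_witness: obtains I where "I \<subseteq> X" "indep I" "card I = rk indep X"
proof -
  have "rk indep X \<in> card ` {I. I \<subseteq> X \<and> indep I}"
    unfolding rk_def using finite_indep_subsets indep_empty by (intro Max_in) auto
  then show thesis using that by auto
qed

lemma rk_mono:
  assumes "X \<subseteq> Y"
  shows "rk indep X \<le> rk indep Y"
proof -
  obtain I where "I \<subseteq> X" "indep I" "card I = rk indep X"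
    by (rule rk_witness)
  with assms show ?thesis
    using card_le_rk[of I Y] by auto
qed

lemma rk_empty: "rk indep {} = 0"
  by (rule rk_witness[of "{}"]) auto

lemma indep_extend_to_rk:
  assumes "indep I" "I \<subseteq> X"
  obtains J where "I \<subseteq> J" "J \<subseteq> X" "indep J" "card J = rk indep X"
proof -
  have "\<exists>J. I \<subseteq> J \<and> J \<subseteq> X \<and> indep J \<and> card J = rk indep X"
    using assms
  proof (induction "rk indep X - card I" arbitrary: I rule: less_induct)
    case less
    show ?case
    proof (cases "card I = rk indep X")
      case False
      obtain K where K: "K \<subseteq> X" "indep K" "card K = rk indep X"
        by (rule rk_witness)
      have less_rk: "card I < card K"
        using card_le_rk[OF less.prems] False K(3) by linarith
      then obtain y where y: "y \<in> K - I" "indep (insert y I)"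
        using indep_augment[OF less.prems(1) K(2)] by blast
      have "insert y I \<subseteq> X"
        using y(1) K(1) less.prems(2) by blast
      moreover have "card (insert y I) = Suc (card I)"
        using y(1) finite_indep[OF less.prems(1)] by simp
      moreover have "card (insert y I) \<le> rk indep X"
        using card_le_rk[OF y(2) calculation(1)] .
      ultimately have "rk indep X - card (insert y I) < rk indep X - card I"
        by linarith
      then obtain J where "insert y I \<subseteq> J" "J \<subseteq> X" "indep J" "card J = rk indep X"
        using less.hyps[of "insert y I"] y(2) \<open>insert y I \<subseteq> X\<close> by blast
      then show ?thesis by blast
    qed (use less.prems in blast)
  qed
  with that show thesis by blast
qed

text \<open>In closure terms: x \<notin> cl B implies x \<notin> cl A. This is the one place where
  submodularity (via augmentation) enters.\<close>
lemma rk_insert_less_antimono: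
  assumes "A \<subseteq> B" and gt: "rk indep B < rk indep (insert x B)"
  shows "rk indep A < rk indep (insert x A)"
proof -
  obtain I where I: "I \<subseteq> A" "indep I" "card I = rk indep A"
    by (rule rk_witness)
  have "I \<subseteq> B"
    using I(1) assms(1) by blast
  then obtain J where J: "I \<subseteq> J" "J \<subseteq> B" "indep J" "card J = rk indep B"
    by (rule indep_extend_to_rk[OF I(2)])
  obtain K where K: "K \<subseteq> insert x B" "indep K" "card K = rk indep (insert x B)"
    by (rule rk_witness)
  have "card J < card K"
    using J(4) K(3) gt by simp
  then obtain y where y: "y \<in> K - J" "indep (insert y J)"
    using indep_augment[OF J(3) K(2)] by blast
  have "y = x"
  proof (rule ccontr)
    assume "y \<noteq> x"
    then have "card (insert y J) \<le> rk indep B"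
      using y K(1) J(2) by (intro card_le_rk) auto
    then show False
      using y(1) finite_indep[OF J(3)] J(4) by simp
  qed
  have "x \<notin> B"
    using gt by (auto simp: insert_absorb)
  then have "x \<notin> I"
    using I(1) assms(1) by blast
  then have card_insert: "card (insert x I) = Suc (rk indep A)"
    using finite_indep[OF I(2)] I(3) by simp
  have "insert x I \<subseteq> insert y J"
    using J(1) \<open>y = x\<close> by blast
  then have "indep (insert x I)"
    by (rule indep_subset[OF y(2)])
  then have "card (insert x I) \<le> rk indep (insert x A)"
    using I(1) by (intro card_le_rk) auto
  with card_insert show ?thesis by simp
qed

lemma basis_restr_iff:
  "basis (restr indep X) B \<longleftrightarrow> B \<subseteq> X \<and> indep B \<and> card B = rk indep X"
proof
  assume B: "basis (restr indep X) B"
  then have "indep B" "B \<subseteq> X"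
    unfolding basis_def restr_def by auto
  moreover obtain J where "B \<subseteq> J" "J \<subseteq> X" "indep J" "card J = rk indep X"
    by (rule indep_extend_to_rk[OF calculation])
  moreover have "J = B"
    using B calculation unfolding basis_def restr_def by blast
  ultimately show "B \<subseteq> X \<and> indep B \<and> card B = rk indep X"
    by blast
next
  assume B: "B \<subseteq> X \<and> indep B \<and> card B = rk indep X"
  have "I = B" if "indep I" "I \<subseteq> X" "B \<subseteq> I" for I
    using card_seteq[OF finite_indep[OF that(1)] that(3)] card_le_rk[OF that(1,2)] B by simp
  with B show "basis (restr indep X) B"
    unfolding basis_def restr_def by blast
qed

lemma meets_all_bases_restr_iff:
  "meets_all_bases (restr indep X) C \<longleftrightarrow> rk indep (X - C) < rk indep X"
proof
  assume meets: "meets_all_bases (restr indep X) C"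
  obtain I where I: "I \<subseteq> X - C" "indep I" "card I = rk indep (X - C)"
    by (rule rk_witness)
  have "\<not> basis (restr indep X) I"
    using meets I(1) unfolding meets_all_bases_def by blast
  then show "rk indep (X - C) < rk indep X"
    using I rk_mono[of "X - C" X] unfolding basis_restr_iff by auto
next
  assume less: "rk indep (X - C) < rk indep X"
  show "meets_all_bases (restr indep X) C"
    unfolding meets_all_bases_def basis_restr_iff
  proof (intro allI impI notI)
    fix B assume B: "B \<subseteq> X \<and> indep B \<and> card B = rk indep X" and "C \<inter> B = {}"
    then have "card B \<le> rk indep (X - C)"
      by (intro card_le_rk) auto
    with B less show False by simp
  qed
qed

lemma is_cut_restr_iff:
  "is_cut X (restr indep X) C \<longleftrightarrow> C \<subseteq> X \<and> rk indep (X - C) < rk indep X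
     \<and> (\<forall>C'. C' \<subset> C \<longrightarrow> rk indep X \<le> rk indep (X - C'))"
  unfolding is_cut_def meets_all_bases_restr_iff by (auto simp: not_less)

lemma cut_element_raises_rk:
  assumes "is_cut X (restr indep X) C" "x \<in> C"
  shows "rk indep (X - C) < rk indep (insert x (X - C))"
proof -
  have cut: "C \<subseteq> X" "rk indep (X - C) < rk indep X" "rk indep X \<le> rk indep (X - (C - {x}))"
    using assms unfolding is_cut_restr_iff by auto
  moreover have "X - (C - {x}) = insert x (X - C)"
    using cut(1) assms(2) by auto
  ultimately show ?thesis by simp
qed

lemma is_cut_restrI:
  assumes "C \<subseteq> X" "rk indep X = Suc (rk indep (X - C))"
    and raises: "\<And>x. x \<in> C \<Longrightarrow> rk indep (X - C) < rk indep (insert x (X - C))"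
  shows "is_cut X (restr indep X) C"
  unfolding is_cut_restr_iff
proof (intro conjI allI impI)
  fix C' assume "C' \<subset> C"
  then obtain x where "x \<in> C" "x \<notin> C'" by blast
  then have "rk indep X \<le> rk indep (insert x (X - C))"
    using raises assms(2) by fastforce
  also have "\<dots> \<le> rk indep (X - C')"
    using \<open>x \<in> C\<close> \<open>x \<notin> C'\<close> \<open>C' \<subset> C\<close> assms(1) by (intro rk_mono) auto
  finally show "rk indep X \<le> rk indep (X - C')" .
qed (use assms in auto)

lemma cut_class_raises_rk:
  fixes \<sigma> :: "nat \<Rightarrow> 'a set"
  assumes "disjoint_family_on \<sigma> {1..r}"
    and cuts: "\<And>i. i \<in> {1..r} \<Longrightarrow> is_cut (\<Union>(\<sigma> ` {1..i})) (restr indep (\<Union>(\<sigma> ` {1..i}))) (\<sigma> i)"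
    and "i \<in> {1..r}" "x \<in> \<sigma> i"
  shows "rk indep (\<Union>(\<sigma> ` {1..<i})) < rk indep (insert x (\<Union>(\<sigma> ` {1..<i})))"
  using cut_element_raises_rk[OF cuts[OF assms(3)] assms(4)] prefix_Union_diff[OF assms(1,3)]
  by simp

lemma standard_coloring_restrI:
  fixes \<tau> :: "nat \<Rightarrow> 'a set"
  assumes part: "partition_on Z Q" and \<tau>: "bij_betw \<tau> {1..k} Q" and rk_Z: "rk indep Z = k"
    and raises: "\<And>j x. j \<in> {1..k} \<Longrightarrow> x \<in> \<tau> j \<Longrightarrow>
      rk indep (\<Union>(\<tau> ` {1..<j})) < rk indep (insert x (\<Union>(\<tau> ` {1..<j})))"
  shows "standard_coloring Z (restr indep Z) Q"
proof -
  define U where "U j = \<Union>(\<tau> ` {1..j})" for j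
  have disj: "disjoint_family_on \<tau> {1..k}"
    by (rule disjoint_family_on_bij_betw_partition[OF part \<tau>])
  have U_Z: "U j \<subseteq> Z" if "j \<le> k" for j
    using partition_onD1[OF part] bij_betw_imp_surj_on[OF \<tau>] that unfolding U_def by auto
  have "U k = Z"
    using partition_onD1[OF part] bij_betw_imp_surj_on[OF \<tau>] unfolding U_def by simp
  have rk_steps: "rk indep (U j) < rk indep (U (Suc j))" if j: "j < k" for j
  proof -
    have "\<tau> (Suc j) \<in> Q"
      using bij_betwE[OF \<tau>] j by simp
    then obtain x where x: "x \<in> \<tau> (Suc j)"
      using partition_onD3[OF part] by fastforce
    have "rk indep (U j) < rk indep (insert x (U j))"
      using raises[OF _ x] j unfolding U_def by (simp add: atLeastLessThanSuc_atLeastAtMost)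
    also have "\<dots> \<le> rk indep (U (Suc j))"
      using x unfolding U_def by (intro rk_mono) (auto simp: atLeastAtMostSuc_conv)
    finally show ?thesis .
  qed
  have rk_U: "rk indep (U j) = j" if "j \<le> k" for j
  proof (rule strict_steps_eq_id[of k "\<lambda>j. rk indep (U j)", OF rk_steps _ _ that])
    show "rk indep (U 0) = 0"
      by (simp add: U_def rk_empty)
    show "rk indep (U k) = k"
      using \<open>U k = Z\<close> rk_Z by simp
  qed
  have cuts: "is_cut (U j) (restr indep (U j)) (\<tau> j)" if j: "j \<in> {1..k}" for j
  proof (rule is_cut_restrI)
    have diff: "U j - \<tau> j = \<Union>(\<tau> ` {1..<j})"
      unfolding U_def by (rule prefix_Union_diff[OF disj j])
    also have "\<dots> = U (j - 1)"
      unfolding U_def using j by (cases j) (auto simp: atLeastLessThanSuc_atLeastAtMost)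
    finally show "rk indep (U j) = Suc (rk indep (U j - \<tau> j))"
      using rk_U j by auto
    show "\<tau> j \<subseteq> U j"
      using j unfolding U_def by auto
    show "rk indep (U j - \<tau> j) < rk indep (insert x (U j - \<tau> j))" if "x \<in> \<tau> j" for x
      using raises[OF j that] diff by simp
  qed
  have "\<forall>j\<in>{1..k}. is_cut (U j) (restr (restr indep Z) (U j)) (\<tau> j)"
    using cuts restr_restr[OF U_Z] by simp
  moreover have "rk (restr indep Z) Z = k"
    using rk_restr[of Z Z] rk_Z by simp
  ultimately show ?thesis
    unfolding standard_coloring_def U_def using part \<tau> by blast
qed

end

lemma ordered_traces:
  fixes \<sigma> :: "nat \<Rightarrow> 'a set" and Z :: "'a set"
  assumes part: "partition_on S P" and \<sigma>: "bij_betw \<sigma> {1..r} P"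
  defines "k \<equiv> card {C \<in> P. C \<inter> Z \<noteq> {}}"
  obtains f where "\<And>j. j \<in> {1..k} \<Longrightarrow> f j \<in> {1..r}"
    "\<And>j. j \<in> {1..k} \<Longrightarrow> f ` {1..<j} \<subseteq> {1..<f j}"
    "bij_betw (\<lambda>j. \<sigma> (f j) \<inter> Z) {1..k} (restrict_coloring P Z)"
proof -
  define J where "J = {i \<in> {1..r}. \<sigma> i \<inter> Z \<noteq> {}}"
  have \<sigma>_J: "bij_betw \<sigma> J {C \<in> P. C \<inter> Z \<noteq> {}}"
    using bij_betw_imp_surj_on[OF \<sigma>] unfolding J_def
    by (intro bij_betw_subset[OF \<sigma>]) auto
  then have "card J = k"
    unfolding k_def by (rule bij_betw_same_card)
  obtain f where f: "bij_betw f {1..k} J" "strict_mono_on {1..k} f"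
    using ex_bij_betw_strict_mono_card_from_1[of J] \<open>card J = k\<close> unfolding J_def by auto
  show thesis
  proof
    show f_r: "f j \<in> {1..r}" if "j \<in> {1..k}" for j
      using bij_betwE[OF f(1)] that unfolding J_def by blast
    show "f ` {1..<j} \<subseteq> {1..<f j}" if j: "j \<in> {1..k}" for j
    proof (rule image_subsetI)
      fix i assume "i \<in> {1..<j}"
      then have i: "i \<in> {1..k}" "i < j"
        using j by auto
      then show "f i \<in> {1..<f j}"
        using strict_mono_onD[OF f(2) i(1) j] f_r[OF i(1)] by simp
    qed
    show "bij_betw (\<lambda>j. \<sigma> (f j) \<inter> Z) {1..k} (restrict_coloring P Z)"
      using bij_betw_trans[OF bij_betw_trans[OF f(1) \<sigma>_J] bij_betw_restrict_coloring[OF part]]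
      by (simp add: comp_def)
  qed
qed

theorem lemma14:
  fixes S :: "'a set" and indep :: "'a set \<Rightarrow> bool" and P :: "'a set set" and Z :: "'a set"
  assumes "matroid S indep"
    and "loopless S indep"
    and "standard_coloring S indep P"
    and "Z \<subseteq> S"
    and "card {C \<in> P. C \<inter> Z \<noteq> {}} = rk indep Z"
  shows "standard_coloring Z (restr indep Z) (restrict_coloring P Z)"
proof -
  interpret matroid_on S indep
    by (rule matroid_on.intro) (fact assms(1))
  obtain \<sigma> where part: "partition_on S P" and \<sigma>: "bij_betw \<sigma> {1..rk indep S} P"
    and cuts: "\<And>i. i \<in> {1..rk indep S} \<Longrightarrow>
      is_cut (\<Union>(\<sigma> ` {1..i})) (restr indep (\<Union>(\<sigma> ` {1..i}))) (\<sigma> i)"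
    using assms(3) unfolding standard_coloring_def by blast
  obtain f where f: "\<And>j. j \<in> {1..rk indep Z} \<Longrightarrow> f j \<in> {1..rk indep S}"
    "\<And>j. j \<in> {1..rk indep Z} \<Longrightarrow> f ` {1..<j} \<subseteq> {1..<f j}"
    "bij_betw (\<lambda>j. \<sigma> (f j) \<inter> Z) {1..rk indep Z} (restrict_coloring P Z)"
    using ordered_traces[OF part \<sigma>, of Z, unfolded assms(5)] by blast
  show ?thesis
  proof (rule standard_coloring_restrI[OF partition_on_restrict_coloring[OF part assms(4)] f(3) refl])
    fix j x assume j: "j \<in> {1..rk indep Z}" and x: "x \<in> \<sigma> (f j) \<inter> Z"
    have "\<Union>((\<lambda>j. \<sigma> (f j) \<inter> Z) ` {1..<j}) \<subseteq> \<Union>(\<sigma> ` {1..<f j})"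
      using f(2)[OF j] by blast
    moreover have "rk indep (\<Union>(\<sigma> ` {1..<f j})) < rk indep (insert x (\<Union>(\<sigma> ` {1..<f j})))"
      using cut_class_raises_rk[OF disjoint_family_on_bij_betw_partition[OF part \<sigma>] cuts f(1)[OF j]] x
      by blast
    ultimately show "rk indep (\<Union>((\<lambda>j. \<sigma> (f j) \<inter> Z) ` {1..<j}))
        < rk indep (insert x (\<Union>((\<lambda>j. \<sigma> (f j) \<inter> Z) ` {1..<j})))"
      by (rule rk_insert_less_antimono)
  qed
qed

end
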